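(* For every integer $k\ge 0$, every integer $n\ge 1$ and every real $x$, $$W^{(k)}_{n}(x)=(-2)^{\frac{n(n-1)}{2}}\,\sin^{\frac{n(n+1)}{2}}(x)\,G(n+1)\,C^{(n)}_{k}(\cos x).$$
   Context: For smooth functions $f_1,\dots,f_n$ of a real variable $x$, $\mathrm{Wr}\{f_1,\dots,f_n\}$ denotes the Wronskian, i.e. the determinant of the $n\times n$ matrix whose $(i,j)$ entry is $f_j^{(i-1)}(x)$, $i,j=1,\dots,n$. Define $W^{(k)}_1(x):=\sin((k+1)x)$ and, for $n\ge 2$, $W^{(k)}_n(x):=\mathrm{Wr}\{\sin(x),\sin(2x),\dots,\sin((n-1)x),\sin((n+k)x)\}$. Here $G(n+1)=\prod_{j=0}^{n-1}j!$ (Barnes $G$-function at a positive integer), and $C^{(\lambda)}_k$ is the Gegenbauer polynomial, defined by $(1-2tz+z^2)^{-\lambda}=\sum_{k\ge0}C^{(\lambda)}_k(t)z^k$. *)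

theory Defs
  imports "HOL-Analysis.Analysis" "HOL-Computational_Algebra.Formal_Power_Series"
begin

definition det_n :: "nat \<Rightarrow> (nat \<Rightarrow> nat \<Rightarrow> real) \<Rightarrow> real" where
  "det_n n M = (\<Sum>p | p permutes {..<n}. of_int (sign p) * (\<Prod>i<n. M i (p i)))"

definition wronskian :: "nat \<Rightarrow> (nat \<Rightarrow> real \<Rightarrow> real) \<Rightarrow> real \<Rightarrow> real" where
  "wronskian n f x = det_n n (\<lambda>i j. (deriv ^^ i) (f j) x)"

definition W :: "nat \<Rightarrow> nat \<Rightarrow> real \<Rightarrow> real" where
  "W k n x = (if n = 1 then sin (real (k + 1) * x)
     else wronskian n (\<lambda>j t. if j + 1 < n then sin (real (j + 1) * t) else sin (real (n + k) * t)) x)"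

text \<open>Barnes G at a positive integer: G(m) = prod_{j=0}^{m-2} j!, so G(n+1) = prod_{j<n} j!.\<close>
definition barnes_G :: "nat \<Rightarrow> real" where
  "barnes_G m = (\<Prod>j<m - 1. fact j)"

definition gegenbauer :: "nat \<Rightarrow> nat \<Rightarrow> real \<Rightarrow> real" where
  "gegenbauer lam k t = fps_nth (inverse ((1 - fps_const (2 * t) * fps_X + fps_X ^ 2) ^ lam)) k"

end

theory Submission
  imports Defs "Jordan_Normal_Form.Determinant"
begin

text \<open>
  Every function in the Wronskian has the form \<open>sin t * P (cos t)\<close> with \<open>P\<close> a Gegenbauer
  polynomial: \<open>sin ((m+1) t) = sin t * C\<^sup>(\<^sup>1\<^sup>)\<^sub>m (cos t)\<close>.  By induction, the \<open>i\<close>-th derivative of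
  \<open>sin t * P (cos t)\<close> is a combination of \<open>P\<^sup>(\<^sup>l\<^sup>) (cos t)\<close>, \<open>l \<le> i\<close>, whose leading coefficient is
  \<open>sin t * (- sin t)\<^sup>i\<close>.  Hence the Wronskian matrix is a lower triangular matrix times the
  matrix \<open>(P\<^sub>j\<^sup>(\<^sup>l\<^sup>) (cos x))\<close>, which is itself upper triangular because \<open>deg P\<^sub>j = j\<close> for
  \<open>j < n - 1\<close>.  Finally \<open>d/dt C\<^sup>(\<^sup>l\<^sup>)\<^sub>k = 2 l C\<^sup>(\<^sup>l\<^sup>+\<^sup>1\<^sup>)\<^sub>k\<^sub>-\<^sub>1\<close>, so the diagonal entries are
  \<open>2\<^sup>j j!\<close>, except the last one, which is \<open>2\<^sup>n\<^sup>-\<^sup>1 (n-1)! C\<^sup>(\<^sup>n\<^sup>)\<^sub>k (cos x)\<close>.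
\<close>

lemma det_n_eq_det: "det_n n M = det (mat n n (\<lambda>(i,j). M i j))"
  unfolding det_n_def det_def by (auto simp: atLeast0LessThan intro!: sum.cong prod.cong)

lemma det_n_upper_triangular:
  assumes "\<And>i j. j < i \<Longrightarrow> i < n \<Longrightarrow> N i j = 0"
  shows "det_n n N = (\<Prod>i<n. N i i)"
proof -
  have "det_n n N = prod_list (diag_mat (mat n n (\<lambda>(i,j). N i j)))"
    unfolding det_n_eq_det
    by (rule det_upper_triangular[of _ n]) (auto simp: upper_triangular_def assms)
  then show ?thesis
    by (simp add: prod_list_diag_prod atLeast0LessThan)
qed

lemma det_n_lower_triangular_mult:
  assumes "\<And>i j. i < n \<Longrightarrow> j < n \<Longrightarrow> M i j = (\<Sum>l\<le>i. T i l * N l j)"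
  shows "det_n n M = (\<Prod>i<n. T i i) * det_n n N"
proof -
  define T' where "T' = (\<lambda>i l. if l \<le> i then T i l else 0)"
  have row: "(\<Sum>l<n. T' i l * N l j) = (\<Sum>l\<le>i. T i l * N l j)" if "i < n" for i j
  proof -
    have "(\<Sum>l<n. T' i l * N l j) = (\<Sum>l<n. if l \<in> {..i} then T i l * N l j else 0)"
      by (auto simp: T'_def intro!: sum.cong)
    also have "\<dots> = (\<Sum>l\<in>{..<n} \<inter> {..i}. T i l * N l j)"
      by (simp add: sum.inter_restrict)
    also have "{..<n} \<inter> {..i} = {..i}" using that by auto
    finally show ?thesis .
  qed
  have factor: "mat n n (\<lambda>(i,j). M i j) = mat n n (\<lambda>(i,j). T' i j) * mat n n (\<lambda>(i,j). N i j)"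
    by (rule eq_matI) (auto simp: scalar_prod_def assms row atLeast0LessThan)
  have "det (mat n n (\<lambda>(i,j). T' i j)) = (\<Prod>i<n. T i i)"
    by (subst det_lower_triangular[of n])
       (auto simp: T'_def prod_list_diag_prod atLeast0LessThan)
  then show ?thesis
    unfolding det_n_eq_det factor by (subst det_mult[of _ n]) auto
qed

text \<open>
  The recursion in the upper index comes from
  \<open>(1 - 2tz + z\<^sup>2)\<^sup>-\<^sup>l = (1 - 2tz + z\<^sup>2) (1 - 2tz + z\<^sup>2)\<^sup>-\<^sup>(\<^sup>l\<^sup>+\<^sup>1\<^sup>)\<close>,
  solved for the coefficients of the second factor.
\<close>
fun gegenbauer_poly :: "nat \<Rightarrow> nat \<Rightarrow> real poly" where
  "gegenbauer_poly 0 k = (if k = 0 then 1 else 0)"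
| "gegenbauer_poly (Suc l) 0 = gegenbauer_poly l 0"
| "gegenbauer_poly (Suc l) (Suc 0) = gegenbauer_poly l 1 + [:0, 2:] * gegenbauer_poly (Suc l) 0"
| "gegenbauer_poly (Suc l) (Suc (Suc k)) =
     gegenbauer_poly l (Suc (Suc k)) + [:0, 2:] * gegenbauer_poly (Suc l) (Suc k)
     - gegenbauer_poly (Suc l) k"

lemma gegenbauer_poly_0_right [simp]: "gegenbauer_poly l 0 = 1"
  by (induction l) auto

lemma gegenbauer_recurrence:
  "gegenbauer l m t = gegenbauer (Suc l) m t
     - (if m = 0 then 0 else 2 * t * gegenbauer (Suc l) (m - 1) t)
     + (if m < 2 then 0 else gegenbauer (Suc l) (m - 2) t)"
proof -
  define A :: "real fps" where "A = 1 - fps_const (2 * t) * fps_X + fps_X ^ 2"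
  define G where "G = inverse (A ^ Suc l)"
  have "inverse (A ^ l) = A * inverse A * inverse (A ^ l)"
    by (simp add: A_def inverse_mult_eq_1')
  also have "\<dots> = A * G"
    by (simp add: G_def fps_inverse_mult mult.assoc)
  also have "\<dots> = G - fps_const (2 * t) * (fps_X * G) + fps_X ^ 2 * G"
    by (simp add: A_def algebra_simps)
  finally have "inverse (A ^ l) = G - fps_const (2 * t) * (fps_X * G) + fps_X ^ 2 * G" .
  then show ?thesis
    by (simp add: gegenbauer_def A_def G_def fps_X_mult_nth fps_X_power_mult_nth
        fps_mult_left_const_nth)
qed

lemma poly_gegenbauer_poly: "poly (gegenbauer_poly l k) t = gegenbauer l k t"
proof (induction l k rule: gegenbauer_poly.induct)
  case (1 k)
  then show ?case by (simp add: gegenbauer_def)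
next
  case (2 l)
  then show ?case using gegenbauer_recurrence[of l 0 t] by simp
next
  case (3 l)
  then show ?case using gegenbauer_recurrence[of l 1 t] by simp
next
  case (4 l k)
  then show ?case using gegenbauer_recurrence[of l "Suc (Suc k)" t] by simp
qed

lemma pderiv_gegenbauer_poly:
  "pderiv (gegenbauer_poly l m) =
     (if m = 0 then 0 else Polynomial.smult (2 * real l) (gegenbauer_poly (Suc l) (m - 1)))"
proof (induction l m rule: gegenbauer_poly.induct)
  case (1 k)
  then show ?case by (auto simp: pderiv_pCons)
next
  case (2 l)
  then show ?case by simp
next
  case (3 l)
  then show ?case by (simp add: pderiv_add pderiv_pCons)
next
  case (4 l k)
  let ?C = "gegenbauer_poly"
  have "pderiv (?C (Suc l) (Suc (Suc k))) =
      pderiv (?C l (Suc (Suc k))) + [:2:] * ?C (Suc l) (Suc k)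
      + [:0, 2:] * pderiv (?C (Suc l) (Suc k)) - pderiv (?C (Suc l) k)"
    by (simp only: gegenbauer_poly.simps(4) pderiv_add pderiv_diff pderiv_mult)
       (simp add: pderiv_pCons)
  also have "\<dots> =
      Polynomial.smult (2 * real l) (?C (Suc l) (Suc k)) + [:2:] * ?C (Suc l) (Suc k)
      + [:0, 2:] * Polynomial.smult (2 * real (Suc l)) (?C (Suc (Suc l)) k)
      - (if k = 0 then 0 else Polynomial.smult (2 * real (Suc l)) (?C (Suc (Suc l)) (k - 1)))"
    using 4 by (simp del: gegenbauer_poly.simps)
  also have "\<dots> = Polynomial.smult (2 * real (Suc l)) (?C (Suc (Suc l)) (Suc k))"
    by (cases k)
       (simp_all del: gegenbauer_poly.simps add: gegenbauer_poly.simps(3,4)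
         flip: poly_eq_poly_eq_iff, auto simp: fun_eq_iff algebra_simps)
  finally show ?case by simp
qed

lemma higher_pderiv_gegenbauer_poly:
  "(pderiv ^^ i) (gegenbauer_poly l k) =
     (if i \<le> k then Polynomial.smult (\<Prod>r<i. 2 * real (l + r)) (gegenbauer_poly (l + i) (k - i)) else 0)"
proof (induction i)
  case (Suc i)
  then show ?case
    by (cases "Suc i \<le> k")
       (auto simp: pderiv_smult pderiv_gegenbauer_poly Suc_diff_Suc mult_ac pderiv_0
         intro: le_antisym)
qed simp

lemma gegenbauer_0_right [simp]: "gegenbauer l 0 t = 1"
  using poly_gegenbauer_poly[of l 0 t] by simp

lemma poly_higher_pderiv_gegenbauer_poly_1:
  assumes "i \<le> k"
  shows "poly ((pderiv ^^ i) (gegenbauer_poly 1 k)) t = 2 ^ i * fact i * gegenbauer (Suc i) (k - i) t"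
proof -
  have "(\<Prod>r<i. 2 * real (1 + r)) = 2 ^ i * fact i"
    by (induction i) (simp_all add: algebra_simps)
  then show ?thesis
    using assms by (simp add: higher_pderiv_gegenbauer_poly poly_gegenbauer_poly)
qed

text \<open>\<open>C\<^sup>(\<^sup>1\<^sup>)\<^sub>m\<close> is the Chebyshev polynomial of the second kind.\<close>
lemma sin_Suc_mult_eq_gegenbauer_poly:
  "sin (real (Suc m) * x) = sin x * poly (gegenbauer_poly 1 m) (cos x)"
proof -
  have "sin (real (Suc m) * x) = sin x * poly (gegenbauer_poly 1 m) (cos x) \<and>
        sin (real (Suc (Suc m)) * x) = sin x * poly (gegenbauer_poly 1 (Suc m)) (cos x)"
  proof (induction m)
    case 0
    then show ?case by (simp add: sin_double)
  next
    case (Suc m)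
    have "sin (real (Suc (Suc (Suc m))) * x) =
        2 * cos x * sin (real (Suc (Suc m)) * x) - sin (real (Suc m) * x)"
      using sin_add[of "real (Suc (Suc m)) * x" x] sin_diff[of "real (Suc (Suc m)) * x" x]
      by (simp add: algebra_simps)
    then show ?case using Suc by (simp add: algebra_simps)
  qed
  then show ?thesis by simp
qed

definition cos_sin_poly :: "(real \<Rightarrow> real) \<Rightarrow> bool" where
  "cos_sin_poly f \<longleftrightarrow> (\<exists>P Q. f = (\<lambda>x. poly P (cos x) + sin x * poly Q (cos x)))"

lemma cos_sin_poly_const: "cos_sin_poly (\<lambda>x. c)"
  unfolding cos_sin_poly_def by (rule exI[of _ "[:c:]"], rule exI[of _ 0]) simp

lemma cos_sin_poly_sin: "cos_sin_poly sin"
  unfolding cos_sin_poly_def by (rule exI[of _ 0], rule exI[of _ 1]) simp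

lemma cos_sin_poly_diff:
  assumes "cos_sin_poly f" "cos_sin_poly g"
  shows "cos_sin_poly (\<lambda>x. f x - g x)"
proof -
  obtain P Q P' Q' where "f = (\<lambda>x. poly P (cos x) + sin x * poly Q (cos x))"
    "g = (\<lambda>x. poly P' (cos x) + sin x * poly Q' (cos x))"
    using assms unfolding cos_sin_poly_def by blast
  then have "(\<lambda>x. f x - g x) = (\<lambda>x. poly (P - P') (cos x) + sin x * poly (Q - Q') (cos x))"
    by (auto simp: algebra_simps)
  then show ?thesis unfolding cos_sin_poly_def by blast
qed

lemma cos_sin_squares_mult: "cos x * (cos x * a) + sin x * (sin x * a) = (a :: real)"
  by (metis distrib_right mult.assoc mult_1 sin_cos_squared_add3)

lemma cos_sin_poly_mult_sin:
  assumes "cos_sin_poly f"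
  shows "cos_sin_poly (\<lambda>x. f x * sin x)"
proof -
  obtain P Q where f: "f = (\<lambda>x. poly P (cos x) + sin x * poly Q (cos x))"
    using assms unfolding cos_sin_poly_def by blast
  have "f x * sin x = poly ([:1, 0, -1:] * Q) (cos x) + sin x * poly P (cos x)" for x
    by (simp add: f algebra_simps power2_eq_square cos_sin_squares_mult)
  then show ?thesis unfolding cos_sin_poly_def by blast
qed

lemma cos_sin_poly_has_derivative:
  assumes "cos_sin_poly f"
  obtains f' where "cos_sin_poly f'" "\<And>x. (f has_real_derivative f' x) (at x)"
proof -
  obtain P Q where f: "f = (\<lambda>x. poly P (cos x) + sin x * poly Q (cos x))"
    using assms unfolding cos_sin_poly_def by blast
  define f' where "f' = (\<lambda>x. poly ([:0, 1:] * Q - [:1, 0, -1:] * pderiv Q) (cos x)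
                            + sin x * poly (- pderiv P) (cos x))"
  have "(f has_real_derivative f' x) (at x)" for x
  proof -
    have "(f has_real_derivative poly (pderiv P) (cos x) * (- sin x)
            + (cos x * poly Q (cos x) + sin x * (poly (pderiv Q) (cos x) * (- sin x)))) (at x)"
      unfolding f by (auto intro!: derivative_eq_intros DERIV_chain2[OF poly_DERIV])
    moreover have "poly (pderiv P) (cos x) * (- sin x)
        + (cos x * poly Q (cos x) + sin x * (poly (pderiv Q) (cos x) * (- sin x))) = f' x"
      by (simp add: f'_def algebra_simps power2_eq_square cos_sin_squares_mult)
    ultimately show ?thesis by simp
  qed
  moreover have "cos_sin_poly f'" unfolding cos_sin_poly_def f'_def by blast
  ultimately show ?thesis using that by blast
qed

lemma cos_sin_poly_DERIV: "cos_sin_poly f \<Longrightarrow> (f has_real_derivative deriv f x) (at x)"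
  by (metis DERIV_imp_deriv cos_sin_poly_has_derivative)

lemma cos_sin_poly_deriv: "cos_sin_poly f \<Longrightarrow> cos_sin_poly (deriv f)"
  by (metis DERIV_imp_deriv cos_sin_poly_has_derivative ext)

text \<open>
  \<open>sin_deriv_coeff i l\<close> is the coefficient of \<open>P\<^sup>(\<^sup>l\<^sup>) (cos x)\<close> in the \<open>i\<close>-th derivative of
  \<open>sin x * P (cos x)\<close>.
\<close>
primrec sin_deriv_coeff :: "nat \<Rightarrow> nat \<Rightarrow> real \<Rightarrow> real" where
  "sin_deriv_coeff 0 l = (\<lambda>x. if l = 0 then sin x else 0)"
| "sin_deriv_coeff (Suc i) l =
     (\<lambda>x. deriv (sin_deriv_coeff i l) x - (if l = 0 then 0 else sin_deriv_coeff i (l - 1) x * sin x))"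

lemma cos_sin_poly_sin_deriv_coeff: "cos_sin_poly (sin_deriv_coeff i l)"
proof (induction i arbitrary: l)
  case 0
  then show ?case by (cases "l = 0") (simp_all add: cos_sin_poly_sin cos_sin_poly_const)
next
  case (Suc i)
  have "cos_sin_poly (\<lambda>x. if l = 0 then 0 else sin_deriv_coeff i (l - 1) x * sin x)"
    by (cases "l = 0") (simp_all add: cos_sin_poly_const cos_sin_poly_mult_sin Suc)
  then show ?case
    by (simp add: cos_sin_poly_diff cos_sin_poly_deriv Suc)
qed

lemma sin_deriv_coeff_above_diagonal: "i < l \<Longrightarrow> sin_deriv_coeff i l = (\<lambda>x. 0)"
  by (induction i arbitrary: l) auto

lemma sin_deriv_coeff_diagonal: "sin_deriv_coeff i i x = sin x * (- sin x) ^ i"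
  by (induction i arbitrary: x) (auto simp: sin_deriv_coeff_above_diagonal)

lemma higher_deriv_sin_mult_poly_cos:
  "(deriv ^^ i) (\<lambda>x. sin x * poly P (cos x)) =
     (\<lambda>x. \<Sum>l\<le>i. sin_deriv_coeff i l x * poly ((pderiv ^^ l) P) (cos x))"
proof (induction i)
  case 0
  show ?case by simp
next
  case (Suc i)
  let ?c = "sin_deriv_coeff" and ?D = "\<lambda>l x. poly ((pderiv ^^ l) P) (cos x)"
  show ?case
  proof
    fix x
    have "((\<lambda>x. \<Sum>l\<le>i. ?c i l x * ?D l x) has_real_derivative
            (\<Sum>l\<le>i. deriv (?c i l) x * ?D l x - ?c i l x * sin x * ?D (Suc l) x)) (at x)"
      by (auto intro!: derivative_eq_intros DERIV_chain2[OF poly_DERIV] cos_sin_poly_DERIV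
            cos_sin_poly_sin_deriv_coeff sum.cong simp: algebra_simps)
    then have "(deriv ^^ Suc i) (\<lambda>x. sin x * poly P (cos x)) x =
        (\<Sum>l\<le>i. deriv (?c i l) x * ?D l x) - (\<Sum>l\<le>i. ?c i l x * sin x * ?D (Suc l) x)"
      using Suc by (simp add: DERIV_imp_deriv sum_subtractf)
    also have "(\<Sum>l\<le>i. deriv (?c i l) x * ?D l x) = (\<Sum>l\<le>Suc i. deriv (?c i l) x * ?D l x)"
      by (simp add: sin_deriv_coeff_above_diagonal)
    also have "(\<Sum>l\<le>i. ?c i l x * sin x * ?D (Suc l) x) =
        (\<Sum>l\<le>Suc i. (if l = 0 then 0 else ?c i (l - 1) x * sin x) * ?D l x)"
      by (subst sum.atMost_Suc_shift) simp
    finally show "(deriv ^^ Suc i) (\<lambda>x. sin x * poly P (cos x)) x =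
        (\<Sum>l\<le>Suc i. ?c (Suc i) l x * ?D l x)"
      by (simp add: sum_subtractf left_diff_distrib)
  qed
qed

lemma wronskian_sin_mult_poly_cos:
  assumes "\<And>l j. j < l \<Longrightarrow> l < n \<Longrightarrow> (pderiv ^^ l) (P j) = 0"
  shows "wronskian n (\<lambda>j t. sin t * poly (P j) (cos t)) x =
           (\<Prod>i<n. sin x * (- sin x) ^ i * poly ((pderiv ^^ i) (P i)) (cos x))"
proof -
  define N where "N = (\<lambda>l j. poly ((pderiv ^^ l) (P j)) (cos x))"
  have "wronskian n (\<lambda>j t. sin t * poly (P j) (cos t)) x =
          (\<Prod>i<n. sin_deriv_coeff i i x) * det_n n N"
    unfolding wronskian_def N_def
    by (rule det_n_lower_triangular_mult) (simp add: higher_deriv_sin_mult_poly_cos)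
  also have "det_n n N = (\<Prod>i<n. N i i)"
    by (rule det_n_upper_triangular) (simp add: N_def assms)
  finally show ?thesis
    by (simp add: N_def sin_deriv_coeff_diagonal prod.distrib)
qed

lemma W_eq_wronskian_gegenbauer_poly:
  "W k (Suc m) x = wronskian (Suc m)
     (\<lambda>j t. sin t * poly (gegenbauer_poly 1 (if j < m then j else m + k)) (cos t)) x"
proof -
  have W: "W k (Suc m) x = wronskian (Suc m)
      (\<lambda>j t. if j < m then sin (real (j + 1) * t) else sin (real (Suc m + k) * t)) x"
    by (cases "m = 0") (simp_all add: W_def wronskian_def det_n_upper_triangular)
  have "real (j + 1) = real (Suc j)" "real (Suc m + k) = real (Suc (m + k))" for j
    by simp_all
  then show ?thesis
    unfolding W by (simp only: sin_Suc_mult_eq_gegenbauer_poly)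
      (auto intro!: arg_cong[where f = "\<lambda>f. wronskian (Suc m) f x"])
qed

lemma prod_sin_power_fact_eq_barnes_G:
  fixes s :: real
  shows "(\<Prod>i<n. s * (- s) ^ i * (2 ^ i * fact i)) =
           (-2) ^ (n * (n - 1) div 2) * s ^ (n * (n + 1) div 2) * barnes_G (n + 1)"
proof -
  have sum_id: "(\<Sum>i<n. i) = n * (n - 1) div 2"
    by (cases n) (simp_all add: lessThan_Suc_atMost atLeast0AtMost[symmetric] gauss_sum_nat)
  have exponent: "n + n * (n - 1) div 2 = n * (n + 1) div 2"
    by (cases n) (simp_all add: algebra_simps)
  have "(\<Prod>i<n. s * (- s) ^ i * (2 ^ i * fact i)) = (\<Prod>i<n. s * (-2) ^ i * s ^ i * fact i)"
    by (simp add: power_mult_distrib[symmetric] mult_ac)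
  also have "\<dots> = (-2) ^ (\<Sum>i<n. i) * s ^ (n + (\<Sum>i<n. i)) * barnes_G (n + 1)"
    by (simp add: prod.distrib power_sum[symmetric] power_add barnes_G_def)
  finally show ?thesis
    by (simp only: sum_id exponent)
qed

theorem theorem1:
  fixes k n :: nat and x :: real
  assumes "n \<ge> 1"
  shows "W k n x = (-2) ^ (n * (n - 1) div 2) * sin x ^ (n * (n + 1) div 2)
                   * barnes_G (n + 1) * gegenbauer n k (cos x)"
proof -
  obtain m where n: "n = Suc m" using assms by (cases n) auto
  define d where "d = (\<lambda>j. if j < m then j else m + k)"
  have "W k n x = wronskian n (\<lambda>j t. sin t * poly (gegenbauer_poly 1 (d j)) (cos t)) x"
    by (simp add: n d_def W_eq_wronskian_gegenbauer_poly)
  also have "\<dots> = (\<Prod>i<n. sin x * (- sin x) ^ i * poly ((pderiv ^^ i) (gegenbauer_poly 1 (d i))) (cos x))"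
    by (rule wronskian_sin_mult_poly_cos) (simp add: higher_pderiv_gegenbauer_poly d_def n)
  also have "\<dots> = (\<Prod>i<n. sin x * (- sin x) ^ i * (2 ^ i * fact i)) * gegenbauer n k (cos x)"
  proof -
    have "poly ((pderiv ^^ i) (gegenbauer_poly 1 (d i))) (cos x) = 2 ^ i * fact i" if "i < m" for i
      using that poly_higher_pderiv_gegenbauer_poly_1[of i i] by (simp add: d_def)
    then have "(\<Prod>i<m. sin x * (- sin x) ^ i * poly ((pderiv ^^ i) (gegenbauer_poly 1 (d i))) (cos x))
        = (\<Prod>i<m. sin x * (- sin x) ^ i * (2 ^ i * fact i))"
      by (intro prod.cong) simp_all
    moreover have "poly ((pderiv ^^ m) (gegenbauer_poly 1 (d m))) (cos x) =
        2 ^ m * fact m * gegenbauer n k (cos x)"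
      using poly_higher_pderiv_gegenbauer_poly_1[of m "m + k"] by (simp add: d_def n)
    ultimately show ?thesis
      by (simp add: n)
  qed
  finally show ?thesis
    by (simp add: prod_sin_power_fact_eq_barnes_G)
qed

end
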